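(* Let $A\subseteq\mathcal{R}$ be outer measurable and let $I$ be an interval in $\mathcal{R}$. Then $A\cap I$ is outer measurable.
   Context: $\mathcal{R}$ denotes the Levi-Civita field: functions $x:\mathbb{Q}\to\mathbb{R}$ with left-finite support, with componentwise addition and formal power series multiplication, ordered by $x>0$ iff $x\ne0$ and $x[\min\operatorname{supp}x]>0$; it is a non-Archimedean ordered field extension of $\mathbb{R}$, Cauchy complete in the order topology, in which all limits and series are taken (a series $\sum a_n$ converges iff $a_n\to0$). An interval is a set $[a,b],[a,b),(a,b]$ or $(a,b)$ with $a<b$ in $\mathcal{R}$, of length $l=b-a$. A cover of $A\subseteq\mathcal{R}$ is a sequence of intervals $(S_n)_{n\ge1}$ with $A\subseteq\bigcup_n S_n$ and $\sum_n l(S_n)$ convergent in $\mathcal{R}$. $A$ is called outer measurable if the infimum $\inf\{\sum_n l(S_n): (S_n)\text{ a cover of }A\}$ exists in $\mathcal{R}$; this infimum is then called the outer measure $M_u(A)$. *)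

theory Defs
  imports Complex_Main
begin

text \<open>The Levi-Civita field: functions from the rationals to the reals with
left-finite support (for every q only finitely many support points are \<le> q).\<close>

typedef lc = "{x :: rat \<Rightarrow> real. \<forall>q. finite {r. r \<le> q \<and> x r \<noteq> 0}}"
  by (rule exI[of _ "\<lambda>_. 0"]) simp

definition lc_zero :: lc where
  "lc_zero = Abs_lc (\<lambda>_. 0)"

definition lc_add :: "lc \<Rightarrow> lc \<Rightarrow> lc" where
  "lc_add x y = Abs_lc (\<lambda>q. Rep_lc x q + Rep_lc y q)"

definition lc_diff :: "lc \<Rightarrow> lc \<Rightarrow> lc" where
  "lc_diff x y = Abs_lc (\<lambda>q. Rep_lc x q - Rep_lc y q)"

text \<open>Formal power series (Cauchy) product; the sum is finite for left-finite x, y.\<close>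
definition lc_mult :: "lc \<Rightarrow> lc \<Rightarrow> lc" where
  "lc_mult x y = Abs_lc (\<lambda>q. \<Sum>a\<in>{a. Rep_lc x a \<noteq> 0 \<and> Rep_lc y (q - a) \<noteq> 0}.
                               Rep_lc x a * Rep_lc y (q - a))"

definition lc_pos :: "lc \<Rightarrow> bool" where
  "lc_pos x \<longleftrightarrow> (\<exists>q. Rep_lc x q > 0 \<and> (\<forall>r<q. Rep_lc x r = 0))"

definition lc_less :: "lc \<Rightarrow> lc \<Rightarrow> bool" where
  "lc_less x y \<longleftrightarrow> lc_pos (lc_diff y x)"

definition lc_le :: "lc \<Rightarrow> lc \<Rightarrow> bool" where
  "lc_le x y \<longleftrightarrow> x = y \<or> lc_less x y"

primrec lc_psum :: "(nat \<Rightarrow> lc) \<Rightarrow> nat \<Rightarrow> lc" where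
  "lc_psum f 0 = lc_zero"
| "lc_psum f (Suc n) = lc_add (lc_psum f n) (f n)"

definition lc_sums :: "(nat \<Rightarrow> lc) \<Rightarrow> lc \<Rightarrow> bool" where
  "lc_sums f s \<longleftrightarrow> (\<forall>e. lc_pos e \<longrightarrow> (\<exists>N. \<forall>n\<ge>N.
      lc_less (lc_diff s (lc_psum f n)) e \<and> lc_less (lc_diff (lc_psum f n) s) e))"

definition lc_interval :: "lc \<Rightarrow> lc \<Rightarrow> bool \<Rightarrow> bool \<Rightarrow> lc set" where
  "lc_interval a b cl cr = {x. (if cl then lc_le a x else lc_less a x) \<and>
                               (if cr then lc_le x b else lc_less x b)}"

definition lc_is_interval :: "lc set \<Rightarrow> bool" where
  "lc_is_interval I \<longleftrightarrow> (\<exists>a b cl cr. lc_less a b \<and> I = lc_interval a b cl cr)"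

definition lc_cover_sum :: "lc set \<Rightarrow> lc \<Rightarrow> bool" where
  "lc_cover_sum A s \<longleftrightarrow> (\<exists>a b cl cr. (\<forall>n. lc_less (a n) (b n)) \<and>
      A \<subseteq> (\<Union>n. lc_interval (a n) (b n) (cl n) (cr n)) \<and>
      lc_sums (\<lambda>n. lc_diff (b n) (a n)) s)"

definition lc_is_inf :: "lc set \<Rightarrow> lc \<Rightarrow> bool" where
  "lc_is_inf S m \<longleftrightarrow> (\<forall>s\<in>S. lc_le m s) \<and> (\<forall>m'. (\<forall>s\<in>S. lc_le m' s) \<longrightarrow> lc_le m' m)"

definition outer_measurable :: "lc set \<Rightarrow> bool" where
  "outer_measurable A \<longleftrightarrow> (\<exists>m. lc_is_inf {s. lc_cover_sum A s} m)"

end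

theory Submission
  imports Defs
begin

text \<open>Write \<open>t\<^sup>q\<close> for the element of \<open>\<R>\<close> with a single coefficient \<open>1\<close> at \<open>q\<close>. Convergence in
  the order topology means that the differences eventually vanish below every exponent \<open>q\<close>, and
  Cauchy sequences in this sense converge because their coefficients eventually stabilise.

  Take a cover of \<open>A\<close> whose sum \<open>s\<close> is within \<open>t\<^sup>q\<close> of \<open>M\<^sub>u(A)\<close> and cut each of its intervals at
  the endpoints of \<open>I\<close>. This yields covers of \<open>A \<inter> I\<close> and of \<open>A \<setminus> I\<close> with sums \<open>v\<close> and
  \<open>u\<close>, where \<open>v + u - s\<close> vanishes below \<open>q\<close>. Every cover of \<open>A \<inter> I\<close>, together with the one of
  \<open>A \<setminus> I\<close>, covers \<open>A\<close>; so \<open>M\<^sub>u(A) - u\<close> is a lower bound for the cover sums of \<open>A \<inter> I\<close> that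
  differs from the cover sum \<open>v\<close> only below \<open>q\<close>. As \<open>q\<close> is arbitrary, completeness produces
  the infimum.\<close>

definition left_finite :: "(rat \<Rightarrow> real) \<Rightarrow> bool" where
  "left_finite f \<longleftrightarrow> (\<forall>q. finite {r. r \<le> q \<and> f r \<noteq> 0})"

lemma left_finite_Rep_lc: "left_finite (Rep_lc x)"
  using Rep_lc unfolding left_finite_def by simp

lemma Rep_lc_Abs_lc: "left_finite f \<Longrightarrow> Rep_lc (Abs_lc f) = f"
  by (simp add: Abs_lc_inverse left_finite_def)

lemma left_finite_if_zero_outside:
  assumes "left_finite f" "left_finite g" "\<And>r. f r = 0 \<Longrightarrow> g r = 0 \<Longrightarrow> h r = 0"
  shows "left_finite h"
  unfolding left_finite_def
proof
  fix q
  have "{r. r \<le> q \<and> h r \<noteq> 0} \<subseteq> {r. r \<le> q \<and> f r \<noteq> 0} \<union> {r. r \<le> q \<and> g r \<noteq> 0}"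
    using assms(3) by blast
  then show "finite {r. r \<le> q \<and> h r \<noteq> 0}"
    by (rule finite_subset) (use assms(1,2) in \<open>simp add: left_finite_def\<close>)
qed

lemma lc_eq_iff: "x = y \<longleftrightarrow> (\<forall>q. Rep_lc x q = Rep_lc y q)"
  by (metis Rep_lc_inject ext)

instantiation lc :: ab_group_add
begin

definition zero_lc_def: "0 = lc_zero"
definition plus_lc_def: "x + y = lc_add x y"
definition minus_lc_def: "x - y = lc_diff x y"
definition uminus_lc_def: "- x = lc_diff lc_zero x"

lemma Rep_lc_simps:
  "Rep_lc 0 = (\<lambda>q. 0)"
  "Rep_lc (x + y) = (\<lambda>q. Rep_lc x q + Rep_lc y q)"
  "Rep_lc (x - y) = (\<lambda>q. Rep_lc x q - Rep_lc y q)"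
  "Rep_lc (- x) = (\<lambda>q. - Rep_lc x q)"
proof -
  have zero: "Rep_lc lc_zero = (\<lambda>q. 0)"
    unfolding lc_zero_def by (rule Rep_lc_Abs_lc) (simp add: left_finite_def)
  have diff: "Rep_lc (lc_diff x y) = (\<lambda>q. Rep_lc x q - Rep_lc y q)" for x y
    unfolding lc_diff_def
    by (rule Rep_lc_Abs_lc, rule left_finite_if_zero_outside[OF left_finite_Rep_lc[of x] left_finite_Rep_lc[of y]]) simp
  show "Rep_lc 0 = (\<lambda>q. 0)" by (simp add: zero_lc_def zero)
  show "Rep_lc (x + y) = (\<lambda>q. Rep_lc x q + Rep_lc y q)"
    unfolding plus_lc_def lc_add_def
    by (rule Rep_lc_Abs_lc, rule left_finite_if_zero_outside[OF left_finite_Rep_lc[of x] left_finite_Rep_lc[of y]]) simp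
  show "Rep_lc (x - y) = (\<lambda>q. Rep_lc x q - Rep_lc y q)" by (simp add: minus_lc_def diff)
  show "Rep_lc (- x) = (\<lambda>q. - Rep_lc x q)" by (simp add: uminus_lc_def diff zero)
qed

instance
  by standard (simp_all add: lc_eq_iff Rep_lc_simps)

end

definition vanishes_below :: "rat \<Rightarrow> lc \<Rightarrow> bool" where
  "vanishes_below q x \<longleftrightarrow> (\<forall>r<q. Rep_lc x r = 0)"

lemma lc_pos_iff_leading: "lc_pos x \<longleftrightarrow> (\<exists>q. 0 < Rep_lc x q \<and> vanishes_below q x)"
  unfolding lc_pos_def vanishes_below_def ..

lemma lc_pos_add:
  assumes "lc_pos x" "lc_pos y"
  shows "lc_pos (x + y)"
proof -
  obtain p q where p: "0 < Rep_lc x p" "vanishes_below p x" and q: "0 < Rep_lc y q" "vanishes_below q y"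
    using assms by (auto simp: lc_pos_iff_leading)
  have "0 < Rep_lc (x + y) (min p q)" "vanishes_below (min p q) (x + y)"
    using p q by (auto simp: vanishes_below_def Rep_lc_simps min_def not_le le_less)
  then show ?thesis unfolding lc_pos_iff_leading by blast
qed

lemma lc_pos_asym: "\<not> (lc_pos x \<and> lc_pos (- x))"
proof
  assume "lc_pos x \<and> lc_pos (- x)"
  then obtain p q where p: "0 < Rep_lc x p" "vanishes_below p x" and q: "Rep_lc x q < 0" "vanishes_below q x"
    by (auto simp: lc_pos_iff_leading vanishes_below_def Rep_lc_simps)
  then show False
    by (cases p q rule: linorder_cases) (auto simp: vanishes_below_def)
qed

lemma lc_leading_exists:
  assumes "x \<noteq> 0"
  obtains p where "Rep_lc x p \<noteq> 0" "vanishes_below p x"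
proof -
  obtain r0 where "Rep_lc x r0 \<noteq> 0" using assms by (auto simp: lc_eq_iff Rep_lc_simps)
  let ?S = "{r. r \<le> r0 \<and> Rep_lc x r \<noteq> 0}"
  have "finite ?S" "r0 \<in> ?S" using left_finite_Rep_lc \<open>Rep_lc x r0 \<noteq> 0\<close>
    by (auto simp: left_finite_def)
  then have "Min ?S \<in> ?S" "\<forall>r\<in>?S. Min ?S \<le> r" using Min_in by auto
  moreover have "vanishes_below (Min ?S) x"
    unfolding vanishes_below_def
  proof (intro allI impI)
    fix r assume "r < Min ?S"
    moreover have "r \<le> r0" using \<open>r < Min ?S\<close> \<open>Min ?S \<in> ?S\<close> by simp
    ultimately show "Rep_lc x r = 0" using \<open>\<forall>r\<in>?S. Min ?S \<le> r\<close> by force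
  qed
  ultimately show thesis by (intro that) auto
qed

lemma lc_trichotomy: "lc_pos x \<or> x = 0 \<or> lc_pos (- x)"
proof (cases "x = 0")
  case False
  then obtain p where "Rep_lc x p \<noteq> 0" "vanishes_below p x" by (rule lc_leading_exists)
  then consider "0 < Rep_lc x p" | "0 < Rep_lc (- x) p" by (force simp: Rep_lc_simps)
  then show ?thesis
    using \<open>vanishes_below p x\<close> by cases (auto simp: lc_pos_iff_leading vanishes_below_def Rep_lc_simps)
qed simp

instantiation lc :: linordered_ab_group_add
begin

definition less_lc_def: "x < y \<longleftrightarrow> lc_less x y"
definition less_eq_lc_def: "x \<le> y \<longleftrightarrow> lc_le x y"

lemma lc_less_iff_pos: "x < y \<longleftrightarrow> lc_pos (y - x)"
  by (simp add: less_lc_def lc_less_def minus_lc_def)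

lemma lc_le_iff_pos: "x \<le> y \<longleftrightarrow> x = y \<or> lc_pos (y - x)"
  by (simp add: less_eq_lc_def lc_le_def lc_less_def minus_lc_def)

instance
proof
  fix x y z :: lc
  show "x < y \<longleftrightarrow> x \<le> y \<and> \<not> y \<le> x"
    using lc_pos_asym[of "y - x"] by (auto simp: lc_less_iff_pos lc_le_iff_pos)
  show "x \<le> x" by (simp add: lc_le_iff_pos)
  show "x \<le> y \<Longrightarrow> y \<le> z \<Longrightarrow> x \<le> z"
    using lc_pos_add[of "y - x" "z - y"] by (auto simp: lc_le_iff_pos)
  show "x \<le> y \<Longrightarrow> y \<le> x \<Longrightarrow> x = y"
    using lc_pos_asym[of "y - x"] by (auto simp: lc_le_iff_pos)
  show "x \<le> y \<Longrightarrow> z + x \<le> z + y"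
    by (simp add: lc_le_iff_pos)
  show "x \<le> y \<or> y \<le> x"
    using lc_trichotomy[of "y - x"] by (auto simp: lc_le_iff_pos)
qed

end

lemma lc_pos_iff: "lc_pos x \<longleftrightarrow> 0 < x"
  by (simp add: lc_less_iff_pos)

lemma lc_less_eq_less: "lc_less x y \<longleftrightarrow> x < y"
  by (simp add: less_lc_def)

lemma lc_le_eq_le: "lc_le x y \<longleftrightarrow> x \<le> y"
  by (simp add: less_eq_lc_def)

lemma lc_diff_eq_minus: "lc_diff x y = x - y"
  by (simp add: minus_lc_def)

lemma vanishes_below_0 [simp]: "vanishes_below q 0"
  by (simp add: vanishes_below_def Rep_lc_simps)

lemma vanishes_below_add: "vanishes_below q x \<Longrightarrow> vanishes_below q y \<Longrightarrow> vanishes_below q (x + y)"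
  by (simp add: vanishes_below_def Rep_lc_simps)

lemma vanishes_below_diff: "vanishes_below q x \<Longrightarrow> vanishes_below q y \<Longrightarrow> vanishes_below q (x - y)"
  by (simp add: vanishes_below_def Rep_lc_simps)

lemma vanishes_below_minus_iff [simp]: "vanishes_below q (- x) \<longleftrightarrow> vanishes_below q x"
  by (simp add: vanishes_below_def Rep_lc_simps)

lemma vanishes_below_sum: "(\<And>i. i \<in> A \<Longrightarrow> vanishes_below q (f i)) \<Longrightarrow> vanishes_below q (sum f A)"
  by (induct A rule: infinite_finite_induct) (auto intro: vanishes_below_add)

lemma vanishes_below_antimono: "vanishes_below q x \<Longrightarrow> p \<le> q \<Longrightarrow> vanishes_below p x"
  by (simp add: vanishes_below_def)

lemma lc_pos_if_leading: "vanishes_below p x \<Longrightarrow> 0 < Rep_lc x p \<Longrightarrow> 0 < x"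
  by (auto simp: lc_pos_iff[symmetric] lc_pos_iff_leading)

lemma vanishes_below_if_nonneg_le:
  assumes "0 \<le> y" "y \<le> D" "vanishes_below q D"
  shows "vanishes_below q y"
proof (cases "y = 0")
  case False
  with assms(1) have "lc_pos y" by (simp add: lc_pos_iff)
  then obtain p where p: "0 < Rep_lc y p" "vanishes_below p y" by (auto simp: lc_pos_iff_leading)
  show ?thesis
  proof (cases "q \<le> p")
    case True
    with p(2) show ?thesis by (rule vanishes_below_antimono)
  next
    case False
    then have "vanishes_below p (y - D)"
      using p(2) vanishes_below_antimono[OF assms(3)] False by (simp add: vanishes_below_diff)
    moreover have "0 < Rep_lc (y - D) p"
      using p(1) assms(3) False by (simp add: vanishes_below_def Rep_lc_simps)
    ultimately have "0 < y - D" by (rule lc_pos_if_leading)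
    then have "D < y" by simp
    with assms(2) show ?thesis by simp
  qed
qed simp

lemma vanishes_below_if_between:
  assumes "- D' \<le> y" "y \<le> D" "vanishes_below q D" "vanishes_below q D'"
  shows "vanishes_below q y"
proof -
  have "0 \<le> y + D'" using add_right_mono[OF assms(1), of D'] by simp
  moreover have "y + D' \<le> D + D'" using assms(2) by simp
  ultimately have "vanishes_below q (y + D')"
    using vanishes_below_if_nonneg_le vanishes_below_add assms(3,4) by blast
  from vanishes_below_diff[OF this assms(4)] show ?thesis by simp
qed

lemma vanishes_below_imp_less:
  assumes "0 < e"
  obtains q where "\<And>y. vanishes_below q y \<Longrightarrow> y < e"
proof -
  obtain p where p: "0 < Rep_lc e p" "vanishes_below p e"
    using assms by (auto simp: lc_pos_iff[symmetric] lc_pos_iff_leading)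
  have "y < e" if "vanishes_below (p + 1) y" for y
  proof -
    have "vanishes_below p (e - y)"
      using p(2) vanishes_below_antimono[OF that] by (simp add: vanishes_below_diff)
    moreover have "0 < Rep_lc (e - y) p"
      using p(1) that by (simp add: vanishes_below_def Rep_lc_simps)
    ultimately have "0 < e - y" by (rule lc_pos_if_leading)
    then show ?thesis by simp
  qed
  then show thesis by (rule that)
qed

definition lc_monom :: "rat \<Rightarrow> lc" where
  "lc_monom q = Abs_lc (\<lambda>r. if r = q then 1 else 0)"

lemma Rep_lc_monom: "Rep_lc (lc_monom q) = (\<lambda>r. if r = q then 1 else 0)"
  unfolding lc_monom_def
proof (rule Rep_lc_Abs_lc)
  show "left_finite (\<lambda>r. if r = q then 1 else 0)"
    unfolding left_finite_def by (intro allI, rule finite_subset[of _ "{q}"]) auto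
qed

lemma lc_monom_pos: "0 < lc_monom q"
  by (rule lc_pos_if_leading[of q]) (simp_all add: vanishes_below_def Rep_lc_monom)

lemma vanishes_below_lc_monom: "vanishes_below q (lc_monom q)"
  by (simp add: vanishes_below_def Rep_lc_monom)

definition lc_tendsto :: "(nat \<Rightarrow> lc) \<Rightarrow> lc \<Rightarrow> bool" where
  "lc_tendsto x L \<longleftrightarrow> (\<forall>q. \<forall>\<^sub>F n in sequentially. vanishes_below q (x n - L))"

lemma lc_tendsto_iff_order:
  "lc_tendsto x L \<longleftrightarrow> (\<forall>e. 0 < e \<longrightarrow> (\<exists>N. \<forall>n\<ge>N. L - x n < e \<and> x n - L < e))"
proof
  assume lim: "lc_tendsto x L"
  show "\<forall>e. 0 < e \<longrightarrow> (\<exists>N. \<forall>n\<ge>N. L - x n < e \<and> x n - L < e)"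
  proof (intro allI impI)
    fix e :: lc assume "0 < e"
    then obtain q where q: "\<And>y. vanishes_below q y \<Longrightarrow> y < e"
      using vanishes_below_imp_less by blast
    from lim obtain N where "\<forall>n\<ge>N. vanishes_below q (x n - L)"
      unfolding lc_tendsto_def eventually_sequentially by blast
    then have "L - x n < e \<and> x n - L < e" if "n \<ge> N" for n
      using q[of "x n - L"] q[of "L - x n"] vanishes_below_minus_iff[of q "x n - L"] that by simp
    then show "\<exists>N. \<forall>n\<ge>N. L - x n < e \<and> x n - L < e" by blast
  qed
next
  assume near: "\<forall>e. 0 < e \<longrightarrow> (\<exists>N. \<forall>n\<ge>N. L - x n < e \<and> x n - L < e)"
  show "lc_tendsto x L"
    unfolding lc_tendsto_def eventually_sequentially
  proof
    fix q
    obtain N where N: "\<forall>n\<ge>N. L - x n < lc_monom q \<and> x n - L < lc_monom q"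
      using near lc_monom_pos by blast
    have "vanishes_below q (x n - L)" if "n \<ge> N" for n
    proof (rule vanishes_below_if_between)
      have "L - x n \<le> lc_monom q" "x n - L \<le> lc_monom q"
        using N that by (auto intro: less_imp_le)
      then show "- lc_monom q \<le> x n - L" "x n - L \<le> lc_monom q"
        using le_imp_neg_le[of "L - x n" "lc_monom q"] by simp_all
    qed (simp_all add: vanishes_below_lc_monom)
    then show "\<exists>N. \<forall>n\<ge>N. vanishes_below q (x n - L)" by blast
  qed
qed

lemma lc_sums_iff_tendsto: "lc_sums f s \<longleftrightarrow> lc_tendsto (\<lambda>n. \<Sum>k<n. f k) s"
proof -
  have "lc_psum f n = (\<Sum>k<n. f k)" for n
    by (induct n) (simp_all add: zero_lc_def plus_lc_def)
  then show ?thesis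
    unfolding lc_sums_def lc_tendsto_iff_order lc_pos_iff lc_less_eq_less lc_diff_eq_minus by simp
qed

lemma lc_tendsto_const: "lc_tendsto (\<lambda>n. c) c"
  by (simp add: lc_tendsto_def)

lemma lc_tendsto_add:
  assumes "lc_tendsto x L" "lc_tendsto y M"
  shows "lc_tendsto (\<lambda>n. x n + y n) (L + M)"
  unfolding lc_tendsto_def
proof
  fix q
  have "\<forall>\<^sub>F n in sequentially. vanishes_below q (x n - L) \<and> vanishes_below q (y n - M)"
    using assms unfolding lc_tendsto_def eventually_conj_iff by blast
  then show "\<forall>\<^sub>F n in sequentially. vanishes_below q (x n + y n - (L + M))"
    by (rule eventually_mono) (simp add: add_diff_add vanishes_below_add)
qed

lemma lc_tendsto_diff:
  assumes "lc_tendsto x L" "lc_tendsto y M"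
  shows "lc_tendsto (\<lambda>n. x n - y n) (L - M)"
  unfolding lc_tendsto_def
proof
  fix q
  have eq: "x n - y n - (L - M) = (x n - L) - (y n - M)" for n
    by (simp add: algebra_simps)
  have "\<forall>\<^sub>F n in sequentially. vanishes_below q (x n - L) \<and> vanishes_below q (y n - M)"
    using assms unfolding lc_tendsto_def eventually_conj_iff by blast
  then show "\<forall>\<^sub>F n in sequentially. vanishes_below q (x n - y n - (L - M))"
    unfolding eq by (rule eventually_mono) (simp add: vanishes_below_diff)
qed

lemma lc_tendsto_le:
  assumes "lc_tendsto x L" "lc_tendsto y M" "\<And>n. x n \<le> y n"
  shows "L \<le> M"
proof (rule ccontr)
  assume "\<not> L \<le> M"
  then have "0 < L - M" by simp
  then obtain q where q: "\<And>z. vanishes_below q z \<Longrightarrow> z < L - M"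
    using vanishes_below_imp_less by blast
  have "\<forall>\<^sub>F n in sequentially. vanishes_below q (y n - x n - (M - L))"
    using lc_tendsto_diff[OF assms(2,1)] unfolding lc_tendsto_def by blast
  then obtain n where "vanishes_below q (y n - x n - (M - L))"
    using eventually_happens'[OF sequentially_bot] by blast
  then have "y n - x n - (M - L) < L - M" by (rule q)
  with assms(3)[of n] show False by simp
qed

lemma lc_tendsto_unique: "lc_tendsto x L \<Longrightarrow> lc_tendsto x M \<Longrightarrow> L = M"
  using lc_tendsto_le[of x L x M] lc_tendsto_le[of x M x L] by (simp add: antisym)

lemma lc_tendsto_vanishes_below:
  assumes "lc_tendsto x L" "\<And>n. vanishes_below q (x n)"
  shows "vanishes_below q L"
proof -
  obtain n where "vanishes_below q (x n - L)"
    using assms(1) eventually_happens'[OF sequentially_bot] unfolding lc_tendsto_def by blast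
  from vanishes_below_diff[OF assms(2)[of n] this] show ?thesis by simp
qed

definition lc_cauchy :: "(nat \<Rightarrow> lc) \<Rightarrow> bool" where
  "lc_cauchy x \<longleftrightarrow> (\<forall>q. \<exists>N. \<forall>m\<ge>N. \<forall>n\<ge>N. vanishes_below q (x m - x n))"

lemma lc_cauchy_coeffs_stabilise:
  assumes "lc_cauchy x"
  obtains N where "\<And>m n q r. N q \<le> m \<Longrightarrow> N q \<le> n \<Longrightarrow> r \<le> q \<Longrightarrow> Rep_lc (x m) r = Rep_lc (x n) r"
proof -
  have "\<forall>q. \<exists>N. \<forall>m\<ge>N. \<forall>n\<ge>N. vanishes_below (q + 1) (x m - x n)"
    using assms unfolding lc_cauchy_def by blast
  then obtain N where N: "\<And>q m n. N q \<le> m \<Longrightarrow> N q \<le> n \<Longrightarrow> vanishes_below (q + 1) (x m - x n)"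
    by metis
  show thesis
  proof (rule that)
    fix m n q r assume "N q \<le> m" "N q \<le> n" "r \<le> q"
    then show "Rep_lc (x m) r = Rep_lc (x n) r"
      using N[of q m n] by (simp add: vanishes_below_def Rep_lc_simps)
  qed
qed

text \<open>Below any fixed exponent the eventual coefficients are read off a single term, which keeps
  the limit left-finite.\<close>

lemma lc_cauchy_imp_tendsto:
  assumes "lc_cauchy x"
  obtains L where "lc_tendsto x L"
proof -
  obtain N where agree: "\<And>m n q r. N q \<le> m \<Longrightarrow> N q \<le> n \<Longrightarrow> r \<le> q \<Longrightarrow> Rep_lc (x m) r = Rep_lc (x n) r"
    using lc_cauchy_coeffs_stabilise[OF assms] by metis
  define Lf where "Lf r = Rep_lc (x (N r)) r" for r
  have Lf_below: "Lf r = Rep_lc (x (N q)) r" if "r \<le> q" for r q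
  proof -
    have "Rep_lc (x (max (N r) (N q))) r = Lf r"
      unfolding Lf_def by (rule agree[where q = r]) simp_all
    moreover have "Rep_lc (x (max (N r) (N q))) r = Rep_lc (x (N q)) r"
      by (rule agree[where q = q]) (simp_all add: that)
    ultimately show ?thesis by simp
  qed
  have "left_finite Lf"
    unfolding left_finite_def
  proof
    fix q
    have "{r. r \<le> q \<and> Lf r \<noteq> 0} = {r. r \<le> q \<and> Rep_lc (x (N q)) r \<noteq> 0}"
      using Lf_below[where q = q] by auto
    then show "finite {r. r \<le> q \<and> Lf r \<noteq> 0}"
      using left_finite_Rep_lc by (simp add: left_finite_def)
  qed
  then have Rep_L: "Rep_lc (Abs_lc Lf) = Lf" by (rule Rep_lc_Abs_lc)
  have "lc_tendsto x (Abs_lc Lf)"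
    unfolding lc_tendsto_def eventually_sequentially
  proof
    fix q
    have "vanishes_below q (x n - Abs_lc Lf)" if "n \<ge> N q" for n
      unfolding vanishes_below_def
    proof (intro allI impI)
      fix r assume "r < q"
      then show "Rep_lc (x n - Abs_lc Lf) r = 0"
        using agree[OF that order_refl, where r = r] Lf_below[where r = r and q = q] \<open>r < q\<close>
        by (simp add: Rep_lc_simps Rep_L)
    qed
    then show "\<exists>M. \<forall>n\<ge>M. vanishes_below q (x n - Abs_lc Lf)" by blast
  qed
  then show thesis by (rule that)
qed

lemma lc_sums_imp_tendsto_zero:
  assumes "lc_sums f s"
  shows "lc_tendsto f 0"
proof -
  have partial: "lc_tendsto (\<lambda>n. \<Sum>k<n. f k) s"
    using assms by (simp add: lc_sums_iff_tendsto)
  have "lc_tendsto (\<lambda>n. \<Sum>k<Suc n. f k) s"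
    unfolding lc_tendsto_def
  proof
    fix q
    show "\<forall>\<^sub>F n in sequentially. vanishes_below q ((\<Sum>k<Suc n. f k) - s)"
      using partial eventually_sequentially_Suc[of "\<lambda>n. vanishes_below q ((\<Sum>k<n. f k) - s)"]
      unfolding lc_tendsto_def by blast
  qed
  from lc_tendsto_diff[OF this partial] show ?thesis by simp
qed

lemma lc_summable_if_tendsto_zero:
  assumes "lc_tendsto f 0"
  obtains s where "lc_sums f s"
proof -
  have "lc_cauchy (\<lambda>n. \<Sum>k<n. f k)"
    unfolding lc_cauchy_def
  proof
    fix q
    obtain N where N: "\<forall>n\<ge>N. vanishes_below q (f n)"
      using assms unfolding lc_tendsto_def eventually_sequentially by auto
    have tail: "vanishes_below q ((\<Sum>k<m. f k) - (\<Sum>k<N. f k))" if "m \<ge> N" for m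
    proof -
      have "(\<Sum>k<m. f k) - (\<Sum>k<N. f k) = (\<Sum>k=N..<m. f k)"
        using sum_diff_nat_ivl[of 0 N m f] that by (simp add: atLeast0LessThan)
      then show ?thesis using N by (auto intro: vanishes_below_sum)
    qed
    have "vanishes_below q ((\<Sum>k<m. f k) - (\<Sum>k<n. f k))" if "m \<ge> N" "n \<ge> N" for m n
      using vanishes_below_diff[OF tail[OF that(1)] tail[OF that(2)]] by simp
    then show "\<exists>N. \<forall>m\<ge>N. \<forall>n\<ge>N. vanishes_below q ((\<Sum>k<m. f k) - (\<Sum>k<n. f k))" by blast
  qed
  then show thesis by (rule lc_cauchy_imp_tendsto) (rule that, simp add: lc_sums_iff_tendsto)
qed

lemma lc_tendsto_zero_le:
  assumes "lc_tendsto g 0" "\<And>n. 0 \<le> f n" "\<And>n. f n \<le> g n"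
  shows "lc_tendsto f 0"
  using assms(1) unfolding lc_tendsto_def
  by (auto elim!: eventually_mono intro: vanishes_below_if_nonneg_le[OF assms(2,3)])

lemma lc_sums_add: "lc_sums f a \<Longrightarrow> lc_sums g b \<Longrightarrow> lc_sums (\<lambda>n. f n + g n) (a + b)"
  unfolding lc_sums_iff_tendsto sum.distrib by (rule lc_tendsto_add)

lemma lc_sums_unique: "lc_sums f a \<Longrightarrow> lc_sums f b \<Longrightarrow> a = b"
  unfolding lc_sums_iff_tendsto by (rule lc_tendsto_unique)

lemma sum_lessThan_interleave:
  fixes f g :: "nat \<Rightarrow> 'a::comm_monoid_add"
  shows "(\<Sum>k<n. if even k then f (k div 2) else g (k div 2)) =
    (\<Sum>k<(n + 1) div 2. f k) + (\<Sum>k<n div 2. g k)"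
proof (induct n)
  case (Suc n)
  show ?case
  proof (cases "even n")
    case True
    then have "(Suc n + 1) div 2 = Suc (n div 2)" "(n + 1) div 2 = n div 2" "Suc n div 2 = n div 2"
      by auto
    with Suc True show ?thesis by (simp add: algebra_simps)
  next
    case False
    then have "(Suc n + 1) div 2 = Suc (n div 2)" "(n + 1) div 2 = Suc (n div 2)"
      "Suc n div 2 = Suc (n div 2)"
      by presburger+
    with Suc False show ?thesis by (simp add: algebra_simps)
  qed
qed simp

lemma lc_sums_interleave:
  assumes "lc_sums f a" "lc_sums g b"
  shows "lc_sums (\<lambda>n. if even n then f (n div 2) else g (n div 2)) (a + b)"
  unfolding lc_sums_iff_tendsto sum_lessThan_interleave lc_tendsto_def eventually_sequentially
proof
  fix q
  obtain N1 N2 where N1: "\<forall>n\<ge>N1. vanishes_below q ((\<Sum>k<n. f k) - a)"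
    and N2: "\<forall>n\<ge>N2. vanishes_below q ((\<Sum>k<n. g k) - b)"
    using assms unfolding lc_sums_iff_tendsto lc_tendsto_def eventually_sequentially by meson
  have "vanishes_below q ((\<Sum>k<(n + 1) div 2. f k) + (\<Sum>k<n div 2. g k) - (a + b))"
    if "n \<ge> 2 * (N1 + N2)" for n
  proof -
    have "(n + 1) div 2 \<ge> N1" "n div 2 \<ge> N2" using that by auto
    then have "vanishes_below q (((\<Sum>k<(n + 1) div 2. f k) - a) + ((\<Sum>k<n div 2. g k) - b))"
      using N1 N2 by (simp add: vanishes_below_add)
    then show ?thesis by (simp add: add_diff_add)
  qed
  then show "\<exists>N. \<forall>n\<ge>N. vanishes_below q ((\<Sum>k<(n + 1) div 2. f k) + (\<Sum>k<n div 2. g k) - (a + b))"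
    by blast
qed

lemma lc_sums_split_nonneg:
  assumes "lc_sums (\<lambda>n. f n + g n + h n) s" "\<And>n. 0 \<le> f n" "\<And>n. 0 \<le> g n" "\<And>n. 0 \<le> h n"
  obtains u v w where "lc_sums f u" "lc_sums g v" "lc_sums h w" "u + v + w = s"
proof -
  have zero: "lc_tendsto (\<lambda>n. f n + g n + h n) 0" using assms(1) by (rule lc_sums_imp_tendsto_zero)
  have "f n \<le> f n + g n + h n" "g n \<le> f n + g n + h n" "h n \<le> f n + g n + h n" for n
    using assms(2-4)[of n] by (simp_all add: add_increasing add_increasing2)
  then have "lc_tendsto f 0" "lc_tendsto g 0" "lc_tendsto h 0"
    using lc_tendsto_zero_le[OF zero] assms(2-4) by blast+
  then obtain u v w where "lc_sums f u" "lc_sums g v" "lc_sums h w"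
    by (meson lc_summable_if_tendsto_zero)
  moreover from this have "u + v + w = s"
    using lc_sums_unique[OF lc_sums_add[OF lc_sums_add] assms(1)] by blast
  ultimately show thesis by (rule that)
qed

lemma lc_sums_lc_monom:
  obtains D where "lc_sums (\<lambda>n. lc_monom (q + of_nat n)) D" "vanishes_below q D"
proof -
  have monom_below: "vanishes_below p (lc_monom (q + of_nat n))" if "p \<le> q + of_nat n" for p n
    using vanishes_below_antimono[OF vanishes_below_lc_monom that] .
  have "lc_tendsto (\<lambda>n. lc_monom (q + of_nat n)) 0"
    unfolding lc_tendsto_def eventually_sequentially
  proof
    fix p
    obtain N :: nat where "p - q \<le> of_nat N" using real_arch_simple by blast
    then have "p \<le> q + of_nat n" if "n \<ge> N" for n
      using that by (simp add: algebra_simps order_trans)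
    then have "\<forall>n\<ge>N. vanishes_below p (lc_monom (q + of_nat n) - 0)"
      by (simp add: monom_below)
    then show "\<exists>N. \<forall>n\<ge>N. vanishes_below p (lc_monom (q + of_nat n) - 0)" by blast
  qed
  then obtain D where D: "lc_sums (\<lambda>n. lc_monom (q + of_nat n)) D"
    by (rule lc_summable_if_tendsto_zero)
  have "vanishes_below q D"
  proof (rule lc_tendsto_vanishes_below)
    show "lc_tendsto (\<lambda>n. \<Sum>k<n. lc_monom (q + of_nat k)) D" using D by (simp add: lc_sums_iff_tendsto)
    show "vanishes_below q (\<Sum>k<n. lc_monom (q + of_nat k))" for n
      by (intro vanishes_below_sum monom_below) simp
  qed
  with D show thesis by (rule that)
qed

lemma lc_interval_subset_atLeastAtMost: "lc_interval a b cl cr \<subseteq> {a..b}"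
  by (auto simp: lc_interval_def lc_le_eq_le lc_less_eq_less split: if_splits)

lemma greaterThanLessThan_subset_lc_interval: "{a<..<b} \<subseteq> lc_interval a b cl cr"
  by (auto simp: lc_interval_def lc_le_eq_le lc_less_eq_less)

lemma lc_cover_sum_iff: "lc_cover_sum A s \<longleftrightarrow> (\<exists>a b cl cr. (\<forall>n. a n < b n) \<and>
    A \<subseteq> (\<Union>n. lc_interval (a n) (b n) (cl n) (cr n)) \<and> lc_sums (\<lambda>n. b n - a n) s)"
  unfolding lc_cover_sum_def lc_less_eq_less lc_diff_eq_minus ..

lemma lc_cover_sumE:
  assumes "lc_cover_sum A s"
  obtains a b where "\<And>n. a n < b n" "A \<subseteq> (\<Union>n. {a n..b n})" "lc_sums (\<lambda>n. b n - a n) s"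
proof -
  obtain a b cl cr where ab: "\<forall>n. a n < b n" "A \<subseteq> (\<Union>n. lc_interval (a n) (b n) (cl n) (cr n))"
    "lc_sums (\<lambda>n. b n - a n) s"
    using assms unfolding lc_cover_sum_iff by blast
  have "(\<Union>n. lc_interval (a n) (b n) (cl n) (cr n)) \<subseteq> (\<Union>n. {a n..b n})"
    by (rule UN_mono) (simp_all add: lc_interval_subset_atLeastAtMost)
  with ab show thesis by (intro that[of a b]) simp_all
qed

lemma lc_cover_sumI:
  assumes "\<And>n. a n < b n" "A \<subseteq> (\<Union>n. {a n..b n})" "lc_sums (\<lambda>n. b n - a n) s"
  shows "lc_cover_sum A s"
proof -
  have "lc_interval (a n) (b n) True True = {a n..b n}" for n
    by (auto simp: lc_interval_def lc_le_eq_le)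
  with assms show ?thesis
    unfolding lc_cover_sum_iff by (intro exI[of _ a] exI[of _ b] exI[of _ "\<lambda>n. True"]) simp
qed

lemma lc_cover_sum_subset: "B \<subseteq> A \<Longrightarrow> lc_cover_sum A s \<Longrightarrow> lc_cover_sum B s"
  unfolding lc_cover_sum_def by blast

lemma lc_cover_sum_Un:
  assumes "lc_cover_sum A s" "lc_cover_sum B t"
  shows "lc_cover_sum (A \<union> B) (s + t)"
proof -
  obtain a b where ab: "\<And>n. a n < b n" "A \<subseteq> (\<Union>n. {a n..b n})" "lc_sums (\<lambda>n. b n - a n) s"
    using lc_cover_sumE[OF assms(1)] by metis
  obtain c d where cd: "\<And>n. c n < d n" "B \<subseteq> (\<Union>n. {c n..d n})" "lc_sums (\<lambda>n. d n - c n) t"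
    using lc_cover_sumE[OF assms(2)] by metis
  define e where "e n = (if even n then a (n div 2) else c (n div 2))" for n
  define f where "f n = (if even n then b (n div 2) else d (n div 2))" for n
  show ?thesis
  proof (rule lc_cover_sumI)
    show "e n < f n" for n using ab(1) cd(1) by (simp add: e_def f_def)
    show "A \<union> B \<subseteq> (\<Union>n. {e n..f n})"
    proof
      fix x assume "x \<in> A \<union> B"
      then consider n where "x \<in> {a n..b n}" | n where "x \<in> {c n..d n}"
        using ab(2) cd(2) by blast
      then show "x \<in> (\<Union>n. {e n..f n})"
      proof cases
        case (1 n)
        then have "x \<in> {e (2 * n)..f (2 * n)}" by (simp add: e_def f_def)
        then show ?thesis by blast
      next
        case (2 n)
        then have "x \<in> {e (2 * n + 1)..f (2 * n + 1)}" by (simp add: e_def f_def)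
        then show ?thesis by blast
      qed
    qed
    have "(\<lambda>n. f n - e n) = (\<lambda>n. if even n then b (n div 2) - a (n div 2) else d (n div 2) - c (n div 2))"
      by (auto simp: e_def f_def)
    then show "lc_sums (\<lambda>n. f n - e n) (s + t)"
      using lc_sums_interleave[OF ab(3) cd(3)] by simp
  qed
qed

lemma lc_cover_sum_widenI:
  assumes "\<And>n. c n \<le> d n" "\<And>n. 0 < \<delta> n" "B \<subseteq> (\<Union>n. {c n..d n})"
    "lc_sums (\<lambda>n. d n + \<delta> n - c n) v"
  shows "lc_cover_sum B v"
proof (rule lc_cover_sumI[OF _ _ assms(4)])
  show "c n < d n + \<delta> n" for n using add_le_less_mono[OF assms(1,2)] by simp
  have "d n \<le> d n + \<delta> n" for n using assms(2)[of n] by simp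
  then have "{c n..d n} \<subseteq> {c n..d n + \<delta> n}" for n by auto
  with assms(3) show "B \<subseteq> (\<Union>n. {c n..d n + \<delta> n})" by blast
qed

text \<open>Each covering interval \<open>[a, b]\<close> is cut at the points where \<open>\<alpha>\<close> and \<open>\<beta>\<close> are clamped into
  it; widening each of the three pieces by \<open>\<delta>\<^sub>n = t\<^bsup>q+n\<^esup>\<close> keeps them nondegenerate at a total
  cost of \<open>3 \<Sum> \<delta>\<^sub>n\<close>, which vanishes below \<open>q\<close>.\<close>

lemma lc_cover_sum_split:
  assumes "lc_cover_sum A s" "\<alpha> \<le> \<beta>"
  obtains v u where "lc_cover_sum (A \<inter> {\<alpha>..\<beta>}) v" "lc_cover_sum (A \<inter> ({..\<alpha>} \<union> {\<beta>..})) u"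
    "vanishes_below q (v + u - s)"
proof -
  obtain a b where ab: "\<And>n. a n < b n" "A \<subseteq> (\<Union>n. {a n..b n})" "lc_sums (\<lambda>n. b n - a n) s"
    using lc_cover_sumE[OF assms(1)] by metis
  define \<delta> where "\<delta> n = lc_monom (q + of_nat n)" for n
  obtain D where D: "lc_sums \<delta> D" "vanishes_below q D"
    unfolding \<delta>_def by (rule lc_sums_lc_monom)
  have \<delta>_pos: "0 < \<delta> n" for n by (simp add: \<delta>_def lc_monom_pos)
  define p where "p n = min (max (a n) \<alpha>) (b n)" for n
  define r where "r n = min (max (a n) \<beta>) (b n)" for n
  have apr: "a n \<le> p n" "p n \<le> r n" "r n \<le> b n" for n
    using ab(1)[of n] assms(2) by (auto simp: p_def r_def min_def max_def)
  have "lc_sums (\<lambda>n. (p n + \<delta> n - a n) + (r n + \<delta> n - p n) + (b n + \<delta> n - r n))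
      (s + (D + D + D))"
  proof -
    have eq: "(p n + \<delta> n - a n) + (r n + \<delta> n - p n) + (b n + \<delta> n - r n)
        = (b n - a n) + (\<delta> n + \<delta> n + \<delta> n)" for n
      by (simp add: algebra_simps)
    show ?thesis
      unfolding eq using lc_sums_add[OF ab(3) lc_sums_add[OF lc_sums_add[OF D(1) D(1)] D(1)]] by simp
  qed
  moreover have "0 \<le> p n + \<delta> n - a n" "0 \<le> r n + \<delta> n - p n" "0 \<le> b n + \<delta> n - r n" for n
    using apr[of n] \<delta>_pos[of n] by (simp_all add: add_increasing2 less_imp_le)
  ultimately obtain u1 v u2 where u1: "lc_sums (\<lambda>n. p n + \<delta> n - a n) u1"
    and v: "lc_sums (\<lambda>n. r n + \<delta> n - p n) v" and u2: "lc_sums (\<lambda>n. b n + \<delta> n - r n) u2"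
    and total: "u1 + v + u2 = s + (D + D + D)"
    by (rule lc_sums_split_nonneg)
  have "A \<inter> {\<alpha>..\<beta>} \<subseteq> (\<Union>n. {p n..r n})" "A \<inter> {..\<alpha>} \<subseteq> (\<Union>n. {a n..p n})"
    "A \<inter> {\<beta>..} \<subseteq> (\<Union>n. {r n..b n})"
    using ab(2) by (fastforce simp: p_def r_def min_le_iff_disj le_max_iff_disj)+
  then have "lc_cover_sum (A \<inter> {\<alpha>..\<beta>}) v" "lc_cover_sum (A \<inter> {..\<alpha>}) u1"
    "lc_cover_sum (A \<inter> {\<beta>..}) u2"
    using lc_cover_sum_widenI[of p r \<delta>, OF apr(2) \<delta>_pos _ v]
      lc_cover_sum_widenI[of a p \<delta>, OF apr(1) \<delta>_pos _ u1]
      lc_cover_sum_widenI[of r b \<delta>, OF apr(3) \<delta>_pos _ u2] by blast+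
  then have "lc_cover_sum (A \<inter> {\<alpha>..\<beta>}) v" "lc_cover_sum (A \<inter> ({..\<alpha>} \<union> {\<beta>..})) (u1 + u2)"
    using lc_cover_sum_Un[of "A \<inter> {..\<alpha>}" u1 "A \<inter> {\<beta>..}" u2] by (simp_all add: Int_Un_distrib)
  moreover have "v + (u1 + u2) - s = D + D + D" using total by (simp add: algebra_simps)
  then have "vanishes_below q (v + (u1 + u2) - s)" using D(2) by (simp add: vanishes_below_add)
  ultimately show thesis by (rule that)
qed

lemma lc_is_inf_approx:
  assumes "lc_is_inf S m"
  obtains s where "s \<in> S" "vanishes_below q (s - m)"
proof -
  have lower: "\<forall>s\<in>S. m \<le> s" and greatest: "\<And>m'. \<forall>s\<in>S. m' \<le> s \<Longrightarrow> m' \<le> m"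
    using assms unfolding lc_is_inf_def lc_le_eq_le by auto
  obtain s where s: "s \<in> S" "s < m + lc_monom q"
  proof (rule ccontr)
    assume "\<not> thesis"
    then have "m + lc_monom q \<le> m" using that greatest by (meson not_le)
    then show False using lc_monom_pos[of q] by simp
  qed
  have "vanishes_below q (s - m)"
    by (rule vanishes_below_if_nonneg_le[of _ "lc_monom q"])
      (use s lower in \<open>simp_all add: diff_le_eq add.commute less_imp_le vanishes_below_lc_monom\<close>)
  with s(1) show thesis by (rule that)
qed

lemma lc_is_inf_if_approximable:
  assumes "\<And>q. \<exists>v t. v \<in> S \<and> (\<forall>s\<in>S. t \<le> s) \<and> vanishes_below q (v - t)"
  obtains m where "lc_is_inf S m"
proof -
  have "\<forall>j::nat. \<exists>v t. v \<in> S \<and> (\<forall>s\<in>S. t \<le> s) \<and> vanishes_below (of_nat j) (v - t)"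
    using assms by blast
  then obtain V T where "\<forall>j. V j \<in> S \<and> (\<forall>s\<in>S. T j \<le> s) \<and> vanishes_below (of_nat j) (V j - T j)"
    by metis
  then have V: "\<And>j. V j \<in> S" and T: "\<And>j s. s \<in> S \<Longrightarrow> T j \<le> s"
    and gap: "\<And>j. vanishes_below (of_nat j) (V j - T j)"
    by blast+
  have eventually_gap: "\<exists>N. \<forall>j\<ge>N. vanishes_below q (V j - T j)" for q
  proof -
    obtain N :: nat where "q \<le> of_nat N" using real_arch_simple by blast
    then have "vanishes_below q (V j - T j)" if "j \<ge> N" for j
      using vanishes_below_antimono[OF gap[of j]] that by (simp add: order_trans)
    then show ?thesis by blast
  qed
  have "lc_cauchy V"
    unfolding lc_cauchy_def
  proof
    fix q
    obtain N where N: "\<forall>j\<ge>N. vanishes_below q (V j - T j)" using eventually_gap by blast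
    have "vanishes_below q (V m - V n)" if "m \<ge> N" "n \<ge> N" for m n
    proof (rule vanishes_below_if_between)
      show "V m - V n \<le> V m - T m" using T[OF V] by (rule diff_left_mono)
      show "- (V n - T n) \<le> V m - V n" using T[OF V, of n m] by simp
    qed (use N that in simp_all)
    then show "\<exists>N. \<forall>m\<ge>N. \<forall>n\<ge>N. vanishes_below q (V m - V n)" by blast
  qed
  then obtain L where L: "lc_tendsto V L" by (rule lc_cauchy_imp_tendsto)
  have "lc_tendsto (\<lambda>j. V j - T j) 0"
    using eventually_gap unfolding lc_tendsto_def eventually_sequentially by simp
  from lc_tendsto_diff[OF L this] have LT: "lc_tendsto T L" by simp
  have "lc_is_inf S L"
    unfolding lc_is_inf_def lc_le_eq_le
  proof (intro conjI allI impI ballI)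
    show "L \<le> s" if "s \<in> S" for s
      using lc_tendsto_le[OF LT lc_tendsto_const] T[OF that] by blast
    show "m' \<le> L" if "\<forall>s\<in>S. m' \<le> s" for m'
      using lc_tendsto_le[OF lc_tendsto_const L] that V by blast
  qed
  then show thesis by (rule that)
qed

lemma lc_cover_sums_Int_interval_approximable:
  assumes m: "lc_is_inf {s. lc_cover_sum A s} m"
    and "\<alpha> \<le> \<beta>" "{\<alpha><..<\<beta>} \<subseteq> I" "I \<subseteq> {\<alpha>..\<beta>}"
  shows "\<exists>v t. v \<in> {s. lc_cover_sum (A \<inter> I) s} \<and> (\<forall>w\<in>{s. lc_cover_sum (A \<inter> I) s}. t \<le> w)
    \<and> vanishes_below q (v - t)"
proof -
  obtain s where s: "lc_cover_sum A s" "vanishes_below q (s - m)"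
    using m by (rule lc_is_inf_approx) simp
  obtain v u where v: "lc_cover_sum (A \<inter> {\<alpha>..\<beta>}) v"
    and u: "lc_cover_sum (A \<inter> ({..\<alpha>} \<union> {\<beta>..})) u" and vu: "vanishes_below q (v + u - s)"
    using lc_cover_sum_split[OF s(1) \<open>\<alpha> \<le> \<beta>\<close>] by metis
  have "A \<inter> I \<subseteq> A \<inter> {\<alpha>..\<beta>}" using assms(4) by blast
  from this v have "lc_cover_sum (A \<inter> I) v" by (rule lc_cover_sum_subset)
  moreover have "m - u \<le> w" if "lc_cover_sum (A \<inter> I) w" for w
  proof -
    have "A \<subseteq> (A \<inter> I) \<union> (A \<inter> ({..\<alpha>} \<union> {\<beta>..}))"
      using assms(3) by fastforce
    then have "lc_cover_sum A (w + u)" using lc_cover_sum_Un[OF that u] by (rule lc_cover_sum_subset)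
    then show ?thesis using m unfolding lc_is_inf_def lc_le_eq_le by (simp add: diff_le_eq)
  qed
  moreover have "vanishes_below q (v - (m - u))"
    using vanishes_below_add[OF vu s(2)] by (simp add: algebra_simps)
  ultimately show ?thesis by blast
qed

theorem proposition3p3:
  fixes A I :: "lc set"
  assumes "outer_measurable A"
    and "lc_is_interval I"
  shows "outer_measurable (A \<inter> I)"
proof -
  obtain m where m: "lc_is_inf {s. lc_cover_sum A s} m"
    using assms(1) unfolding outer_measurable_def by blast
  obtain \<alpha> \<beta> cl cr where "\<alpha> < \<beta>" and I: "I = lc_interval \<alpha> \<beta> cl cr"
    using assms(2) unfolding lc_is_interval_def lc_less_eq_less by blast
  have "{\<alpha><..<\<beta>} \<subseteq> I" "I \<subseteq> {\<alpha>..\<beta>}"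
    unfolding I by (rule greaterThanLessThan_subset_lc_interval lc_interval_subset_atLeastAtMost)+
  with m \<open>\<alpha> < \<beta>\<close> obtain L where "lc_is_inf {s. lc_cover_sum (A \<inter> I) s} L"
    by (metis less_imp_le lc_cover_sums_Int_interval_approximable lc_is_inf_if_approximable)
  then show ?thesis unfolding outer_measurable_def by blast
qed

end
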